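(* Let $U$ be an $r$-dimensional subspace of $\mathbb{R}^d$ with $\mu(U)\le\mu_0$, let $\tilde U$ be a subspace of $U$, and let $x_t\in U$. Let $\delta\in(0,1)$ and let $\Omega$ be a list of $m$ indices sampled independently and uniformly with replacement from $[d]$. (i) If $x_t\notin\tilde U$ and $m\ge 32r\mu_0\log^2(2r/\delta)$, then with probability at least $1-4\delta$, $\|x_{t\Omega}-\mathcal{P}_{\tilde U_\Omega}x_{t\Omega}\|_2>0$. (ii) If $x_t\in\tilde U$, then $\|x_{t\Omega}-\mathcal{P}_{\tilde U_\Omega}x_{t\Omega}\|_2=0$ whenever $\tilde U_\Omega^T\tilde U_\Omega$ is invertible.
   Context: For an $r$-dimensional subspace $U\subseteq\mathbb{R}^d$, $\mu(U)=\frac{d}{r}\max_{i\in[d]}\|\mathcal{P}_Ue_i\|_2^2$. For a list $\Omega\in[d]^m$ and $z\in\mathbb{R}^d$, $z_\Omega\in\mathbb{R}^m$ has $j$th entry $z(\Omega(j))$. For a subspace $\tilde U$ with orthonormal basis matrix (also denoted $\tilde U$), $\tilde U_\Omega$ is the matrix whose $j$th row is row $\Omega(j)$ of $\tilde U$, and $\mathcal{P}_{\tilde U_\Omega}$ is the orthogonal projection onto the column span of $\tilde U_\Omega$ (for $\tilde U=\{0\}$ this projection is $0$). *)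

theory Defs
  imports "HOL-Analysis.Analysis" "HOL-Probability.Probability"
begin

text \<open>Orthogonal projection onto a (closed) subspace S of a Euclidean space:
  the closest point of S. For a linear subspace this is exactly the orthogonal projection.\<close>
definition orth_proj :: "('a::euclidean_space) set \<Rightarrow> 'a \<Rightarrow> 'a" where
  "orth_proj S x = closest_point S x"

definition coherence :: "(real^'d) set \<Rightarrow> real" where
  "coherence U = real CARD('d) / real (dim U) *
     Max (range (\<lambda>i::'d. (norm (orth_proj U (axis i 1)))\<^sup>2))"

text \<open>For Omega : [m] -> [d] (a list of m indices), z_Omega in R^m.\<close>
definition restr :: "('m::finite \<Rightarrow> 'd::finite) \<Rightarrow> real^'d \<Rightarrow> real^'m" where
  "restr \<Omega> z = (\<chi> j. z $ \<Omega> j)"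

text \<open>A list of vectors forming the columns of an orthonormal basis matrix.\<close>
definition orthonormal_list :: "(real^'d) list \<Rightarrow> bool" where
  "orthonormal_list bs \<longleftrightarrow>
     (\<forall>a<length bs. \<forall>b<length bs. bs ! a \<bullet> bs ! b = (if a = b then 1 else 0))"

text \<open>Column span of the sampled basis matrix Utilde_Omega (rows Omega(j) of Utilde).\<close>
definition sampled_colspan :: "(real^'d) list \<Rightarrow> ('m::finite \<Rightarrow> 'd::finite) \<Rightarrow> (real^'m) set" where
  "sampled_colspan bs \<Omega> = span ((\<lambda>b. restr \<Omega> b) ` set bs)"

text \<open>Entries of the k x k matrix Utilde_Omega^T Utilde_Omega, k = length bs.\<close>
definition sampled_gram :: "(real^'d) list \<Rightarrow> ('m::finite \<Rightarrow> 'd::finite) \<Rightarrow> nat \<Rightarrow> nat \<Rightarrow> real" where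
  "sampled_gram bs \<Omega> a b = restr \<Omega> (bs ! a) \<bullet> restr \<Omega> (bs ! b)"

definition sq_invertible :: "nat \<Rightarrow> (nat \<Rightarrow> nat \<Rightarrow> real) \<Rightarrow> bool" where
  "sq_invertible k A \<longleftrightarrow> (\<exists>B. (\<forall>a<k. \<forall>c<k. (\<Sum>l<k. A a l * B l c) = (if a = c then 1 else 0)) \<and>
                              (\<forall>a<k. \<forall>c<k. (\<Sum>l<k. B a l * A l c) = (if a = c then 1 else 0)))"

definition residual :: "(real^'d) list \<Rightarrow> ('m::finite \<Rightarrow> 'd::finite) \<Rightarrow> real^'d \<Rightarrow> real" where
  "residual bs \<Omega> x = norm (restr \<Omega> x - orth_proj (sampled_colspan bs \<Omega>) (restr \<Omega> x))"

end

theory Submission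
  imports Defs "HOL-Analysis.Harmonic_Numbers"
begin

(*
  Part (ii) is immediate: if x lies in span bs then every sampled vector x_Omega lies in the
  sampled column span, so its orthogonal projection is itself and the residual vanishes.

  Part (i) rests on the observation that the residual is positive as soon as sampling is
  injective on U, i.e. no nonzero u in U vanishes on all sampled coordinates.  Writing
  q = 1 / (r * coherence U) = 1 / (d * leverage U), we show by a dimension-counting
  argument that the expected dimension of the subspace of U vanishing on the sampled
  coordinates is at most r (1 - q)^m:
    * Bessel's inequality bounds the trace of an orthonormal basis of V <= U restricted to
      the support of V, giving dim V <= leverage U * |support V|;
    * hence one uniformly sampled coordinate cuts dim V down by 1/(d * leverage U) on
      average, and by induction m samples give the factor (1 - q)^m.
  Markov's inequality for the integer-valued dimension then bounds the failure probability
  by r (1 - q)^m, which the sample-size hypothesis makes at most delta / 2.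
*)

section \<open>Orthonormal sets and orthogonal projections\<close>

lemma bessel_inequality:
  fixes B :: "'a::euclidean_space set"
  assumes fin: "finite B" and orth: "pairwise orthogonal B" and unit: "\<And>b. b \<in> B \<Longrightarrow> norm b = 1"
  shows "(\<Sum>b\<in>B. (b \<bullet> w)\<^sup>2) \<le> (norm w)\<^sup>2"
proof -
  define s where "s = (\<Sum>b\<in>B. (b \<bullet> w) *\<^sub>R b)"
  have sw: "s \<bullet> w = (\<Sum>b\<in>B. (b \<bullet> w)\<^sup>2)"
    unfolding s_def by (simp add: inner_sum_left power2_eq_square)
  have "(norm s)\<^sup>2 = (\<Sum>b\<in>B. (norm ((b \<bullet> w) *\<^sub>R b))\<^sup>2)"
    unfolding s_def
    by (rule norm_sum_Pythagorean[OF fin pairwise_ortho_scaleR]) (use orth in \<open>simp add: pairwise_def\<close>)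
  also have "\<dots> = (\<Sum>b\<in>B. (b \<bullet> w)\<^sup>2)"
    using unit by (simp add: power_mult_distrib)
  finally have ss: "s \<bullet> s = (\<Sum>b\<in>B. (b \<bullet> w)\<^sup>2)"
    by (simp add: power2_norm_eq_inner)
  have "0 \<le> (w - s) \<bullet> (w - s)" by simp
  also have "\<dots> = w \<bullet> w - 2 * (s \<bullet> w) + s \<bullet> s" by (simp add: inner_diff inner_commute)
  finally show ?thesis using sw ss by (simp add: power2_norm_eq_inner)
qed

lemma closest_point_subspace_orthogonal:
  fixes U :: "'a::euclidean_space set"
  assumes U: "subspace U" and z: "z \<in> U"
  shows "(w - closest_point U w) \<bullet> z = 0"
proof -
  have cl: "closed U" using U closed_subspace by blast
  have cv: "convex U" using U subspace_imp_convex by blast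
  let ?p = "closest_point U w"
  have p: "?p \<in> U" using closest_point_in_set[OF cl] z by blast
  have "(w - ?p) \<bullet> ((?p + z) - ?p) \<le> 0"
    by (rule closest_point_dot[OF cv cl]) (simp add: p z U subspace_add)
  moreover have "(w - ?p) \<bullet> ((?p - z) - ?p) \<le> 0"
    by (rule closest_point_dot[OF cv cl]) (simp add: p z U subspace_diff)
  ultimately show ?thesis by (simp add: inner_diff_right)
qed

section \<open>Leverage scores and the dimension of coordinate sections\<close>

definition leverage :: "(real^'d) set \<Rightarrow> real" where
  "leverage U = Max (range (\<lambda>i::'d. (norm (orth_proj U (axis i 1)))\<^sup>2))"

lemma coherence_eq_leverage: "coherence (U :: (real^'d) set) = real CARD('d) / real (dim U) * leverage U"
  unfolding coherence_def leverage_def ..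

lemma leverage_ge: "(norm (closest_point U (axis i 1)))\<^sup>2 \<le> leverage (U :: (real^'d) set)"
  unfolding leverage_def orth_proj_def by (rule Max_ge) auto

definition support :: "(real^'d) set \<Rightarrow> 'd set" where
  "support V = {i. \<exists>u\<in>V. u $ i \<noteq> 0}"

definition vanishing :: "(real^'d) set \<Rightarrow> 'd set \<Rightarrow> (real^'d) set" where
  "vanishing V I = V \<inter> {u. \<forall>i\<in>I. u $ i = 0}"

lemma subspace_vanishing: "subspace V \<Longrightarrow> subspace (vanishing V I)"
  unfolding vanishing_def subspace_def by auto

lemma vanishing_insert: "vanishing V (insert i I) = vanishing (vanishing V {i}) I"
  unfolding vanishing_def by auto

text \<open>A subspace V of U has dimension at most leverage U times the size of its support:
  summing the squared entries of an orthonormal basis of V column by column, each coordinate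
  contributes at most leverage U by Bessel's inequality.\<close>
lemma dim_le_leverage_support:
  fixes U V :: "(real^'d) set"
  assumes U: "subspace U" and V: "subspace V" and VU: "V \<subseteq> U"
  shows "real (dim V) \<le> leverage U * card (support V)"
proof -
  obtain B where BV: "B \<subseteq> V" and orth: "pairwise orthogonal B" and unit: "\<And>x. x \<in> B \<Longrightarrow> norm x = 1"
    and ind: "independent B" and card_B: "card B = dim V"
    using orthonormal_basis_subspace[OF V] by metis
  have fin: "finite B" using ind independent_imp_finite by blast
  have entry_le: "(\<Sum>b\<in>B. (b $ i)\<^sup>2) \<le> leverage U" for i
  proof -
    let ?p = "closest_point U (axis i (1::real))"
    have "b $ i = b \<bullet> ?p" if "b \<in> B" for b
    proof -
      have "b \<in> U" using that BV VU by auto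
      then have orth_b: "b \<bullet> (axis i 1 - ?p) = 0"
        using closest_point_subspace_orthogonal[OF U] by (simp add: inner_commute)
      have "b $ i = b \<bullet> axis i 1" by (simp add: inner_axis)
      also have "\<dots> = b \<bullet> (axis i 1 - ?p) + b \<bullet> ?p" by (simp add: inner_diff_right)
      finally show ?thesis using orth_b by simp
    qed
    then have "(\<Sum>b\<in>B. (b $ i)\<^sup>2) = (\<Sum>b\<in>B. (b \<bullet> ?p)\<^sup>2)" by simp
    also have "\<dots> \<le> (norm ?p)\<^sup>2" by (rule bessel_inequality[OF fin orth unit])
    also have "\<dots> \<le> leverage U" by (rule leverage_ge)
    finally show ?thesis .
  qed
  have "real (dim V) = (\<Sum>b\<in>B. (norm b)\<^sup>2)" using card_B unit by simp
  also have "\<dots> = (\<Sum>i\<in>UNIV. \<Sum>b\<in>B. (b $ i)\<^sup>2)"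
    unfolding power2_norm_eq_inner inner_vec_def by (subst sum.swap) (simp add: power2_eq_square)
  also have "\<dots> = (\<Sum>i\<in>support V. \<Sum>b\<in>B. (b $ i)\<^sup>2)"
    by (rule sum.mono_neutral_right) (use BV in \<open>auto simp: support_def intro!: sum.neutral\<close>)
  also have "\<dots> \<le> (\<Sum>i\<in>support V. leverage U)" by (rule sum_mono) (rule entry_le)
  finally show ?thesis by (simp add: mult.commute)
qed

text \<open>In particular r \<le> d * leverage U, i.e. coherence is at least 1 on a nonzero subspace.\<close>
lemma dim_le_leverage_card:
  fixes U :: "(real^'d) set"
  assumes U: "subspace U"
  shows "real (dim U) \<le> leverage U * CARD('d)"
proof -
  have "0 \<le> leverage U" using leverage_ge[of U] by (meson order_trans zero_le_power2)
  moreover have "card (support U) \<le> CARD('d)" by (rule card_mono) auto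
  ultimately show ?thesis
    using dim_le_leverage_support[OF U U order_refl] by (meson mult_left_mono of_nat_le_iff order_trans)
qed

lemma dim_vanishing_single:
  fixes V :: "(real^'d) set"
  assumes V: "subspace V"
  shows "dim (vanishing V {i}) + (if i \<in> support V then 1 else 0) \<le> dim V"
proof (cases "i \<in> support V")
  case True
  have "vanishing V {i} \<subset> V" using True by (auto simp: support_def vanishing_def)
  then have "span (vanishing V {i}) \<subset> span V"
    using V subspace_vanishing[OF V] by (metis span_eq_iff)
  then have "dim (vanishing V {i}) < dim V" by (rule dim_psubset)
  then show ?thesis using True by simp
next
  case False
  then have "vanishing V {i} = V" by (auto simp: support_def vanishing_def)
  then show ?thesis using False by simp
qed

lemma sum_dim_vanishing_single:
  fixes U V :: "(real^'d) set"
  assumes U: "subspace U" and V: "subspace V" and VU: "V \<subseteq> U" and lev: "leverage U > 0"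
  shows "(\<Sum>i\<in>UNIV. real (dim (vanishing V {i}))) \<le> real (dim V) * (real CARD('d) - 1 / leverage U)"
proof -
  have "(\<Sum>i\<in>UNIV. real (dim (vanishing V {i}))) \<le>
        (\<Sum>i\<in>UNIV. real (dim V) - (if i \<in> support V then 1 else 0))"
  proof (rule sum_mono)
    fix i
    show "real (dim (vanishing V {i})) \<le> real (dim V) - (if i \<in> support V then 1 else 0)"
      using dim_vanishing_single[OF V, of i] by (cases "i \<in> support V") auto
  qed
  also have "\<dots> = real CARD('d) * real (dim V) - real (card (support V))"
    by (simp add: sum_subtractf sum.If_cases)
  also have "\<dots> \<le> real CARD('d) * real (dim V) - real (dim V) / leverage U"
    using dim_le_leverage_support[OF U V VU] lev by (simp add: divide_le_eq mult.commute)
  also have "\<dots> = real (dim V) * (real CARD('d) - 1 / leverage U)" by (simp add: algebra_simps)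
  finally show ?thesis .
qed

lemma sum_dim_vanishing_lists:
  fixes U V :: "(real^'d) set"
  assumes U: "subspace U" and lev: "leverage U > 0" and c: "1 / leverage U \<le> real CARD('d)"
    and V: "subspace V" and VU: "V \<subseteq> U"
  shows "(\<Sum>xs\<in>{xs. length xs = n}. real (dim (vanishing V (set xs))))
           \<le> real (dim V) * (real CARD('d) - 1 / leverage U) ^ n"
  using V VU
proof (induction n arbitrary: V)
  case 0
  then show ?case by (simp add: vanishing_def)
next
  case (Suc n V)
  let ?c = "real CARD('d) - 1 / leverage U"
  let ?f = "\<lambda>V xs. real (dim (vanishing V (set xs)))"
  have lists_Suc: "{xs::'d list. length xs = Suc n} = (\<lambda>p. snd p # fst p) ` ({xs. length xs = n} \<times> UNIV)"
    by (force simp: length_Suc_conv)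
  have "(\<Sum>xs\<in>{xs. length xs = Suc n}. ?f V xs) = (\<Sum>xs\<in>{xs. length xs = n}. \<Sum>i\<in>UNIV. ?f V (i # xs))"
    unfolding lists_Suc by (subst sum.reindex) (auto simp: inj_on_def sum.cartesian_product case_prod_beta)
  also have "\<dots> = (\<Sum>i\<in>UNIV. \<Sum>xs\<in>{xs. length xs = n}. ?f (vanishing V {i}) xs)"
    by (subst sum.swap) (simp add: vanishing_insert[symmetric])
  also have "\<dots> \<le> (\<Sum>i\<in>UNIV. real (dim (vanishing V {i})) * ?c ^ n)"
    by (intro sum_mono Suc.IH subspace_vanishing Suc.prems(1))
       (use Suc.prems(2) in \<open>auto simp: vanishing_def\<close>)
  also have "\<dots> = (\<Sum>i\<in>UNIV. real (dim (vanishing V {i}))) * ?c ^ n"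
    by (simp add: sum_distrib_right)
  also have "\<dots> \<le> (real (dim V) * ?c) * ?c ^ n"
    by (rule mult_right_mono[OF sum_dim_vanishing_single[OF U Suc.prems lev]]) (use c in simp)
  finally show ?case by simp
qed

lemma sum_dim_vanishing_samples:
  fixes U :: "(real^'d) set"
  assumes U: "subspace U" and lev: "leverage U > 0" and c: "1 / leverage U \<le> real CARD('d)"
  shows "(\<Sum>\<Omega>\<in>(UNIV :: ('m::finite \<Rightarrow> 'd) set). real (dim (vanishing U (range \<Omega>))))
           \<le> real (dim U) * (real CARD('d) - 1 / leverage U) ^ CARD('m)"
proof -
  obtain es :: "'m list" where es: "set es = UNIV" "distinct es"
    using finite_distinct_list[of "UNIV :: 'm set"] by auto
  have len: "length es = CARD('m)" using distinct_card[OF es(2)] es(1) by simp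
  have inj: "inj (\<lambda>\<Omega>::'m \<Rightarrow> 'd. map \<Omega> es)"
    by (rule injI) (metis es(1) map_eq_conv UNIV_I ext)
  have "(\<Sum>\<Omega>\<in>(UNIV :: ('m \<Rightarrow> 'd) set). real (dim (vanishing U (range \<Omega>))))
      = (\<Sum>xs\<in>(\<lambda>\<Omega>. map \<Omega> es) ` UNIV. real (dim (vanishing U (set xs))))"
    by (simp add: sum.reindex[OF inj] es(1))
  also have "\<dots> \<le> (\<Sum>xs\<in>{xs. length xs = CARD('m)}. real (dim (vanishing U (set xs))))"
    by (rule sum_mono2) (use finite_lists_length_eq[of "UNIV :: 'd set"] len in auto)
  also have "\<dots> \<le> real (dim U) * (real CARD('d) - 1 / leverage U) ^ CARD('m)"
    by (rule sum_dim_vanishing_lists[OF U lev c U order_refl])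
  finally show ?thesis .
qed

section \<open>Markov's inequality for integer-valued quantities\<close>

lemma prob_nat_zero_ge:
  fixes f :: "'a \<Rightarrow> nat"
  assumes fin: "finite A" and ne: "A \<noteq> {}"
  shows "1 - (\<Sum>x\<in>A. real (f x)) / real (card A) \<le> measure_pmf.prob (pmf_of_set A) {x. f x = 0}"
proof -
  let ?Z = "A \<inter> {x. f x = 0}"
  have "real (card (A - ?Z)) = (\<Sum>x\<in>A - ?Z. 1)" by simp
  also have "\<dots> \<le> (\<Sum>x\<in>A - ?Z. real (f x))" by (rule sum_mono) auto
  also have "\<dots> \<le> (\<Sum>x\<in>A. real (f x))" by (rule sum_mono2) (use fin in auto)
  finally have bad: "real (card (A - ?Z)) \<le> (\<Sum>x\<in>A. real (f x))" .
  have split: "card A = card ?Z + card (A - ?Z)"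
    using card_Diff_subset_Int[of A ?Z] card_mono[of A ?Z] fin by (simp add: Diff_Diff_Int)
  have pos: "0 < real (card A)" using fin ne by (simp add: card_gt_0_iff)
  have "1 - (\<Sum>x\<in>A. real (f x)) / real (card A) = (real (card A) - (\<Sum>x\<in>A. real (f x))) / real (card A)"
    using pos by (simp add: diff_divide_distrib)
  also have "\<dots> \<le> real (card ?Z) / real (card A)"
    by (rule divide_right_mono) (use split bad in auto)
  also have "\<dots> = measure_pmf.prob (pmf_of_set A) {x. f x = 0}"
    using fin ne by (simp add: measure_pmf_of_set)
  finally show ?thesis .
qed

lemma prob_sampling_injective:
  fixes U :: "(real^'d) set"
  assumes U: "subspace U" and lev: "leverage U > 0" and c: "1 / leverage U \<le> real CARD('d)"
  shows "1 - real (dim U) * (1 - 1 / (real CARD('d) * leverage U)) ^ CARD('m)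
           \<le> measure_pmf.prob (pmf_of_set (UNIV :: ('m::finite \<Rightarrow> 'd) set))
                {\<Omega>. vanishing U (range \<Omega>) \<subseteq> {0}}"
proof -
  let ?d = "real CARD('d)"
  have card_samples: "real (card (UNIV :: ('m \<Rightarrow> 'd) set)) = ?d ^ CARD('m)"
    by (simp add: card_fun)
  have "(\<Sum>\<Omega>\<in>(UNIV :: ('m \<Rightarrow> 'd) set). real (dim (vanishing U (range \<Omega>)))) / ?d ^ CARD('m)
      \<le> real (dim U) * (?d - 1 / leverage U) ^ CARD('m) / ?d ^ CARD('m)"
    by (rule divide_right_mono[OF sum_dim_vanishing_samples[OF U lev c]]) simp
  also have "\<dots> = real (dim U) * ((?d - 1 / leverage U) / ?d) ^ CARD('m)"
    by (simp add: power_divide)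
  also have "(?d - 1 / leverage U) / ?d = 1 - 1 / (?d * leverage U)"
    using lev by (simp add: field_simps)
  finally have "1 - real (dim U) * (1 - 1 / (?d * leverage U)) ^ CARD('m)
      \<le> 1 - (\<Sum>\<Omega>\<in>(UNIV :: ('m \<Rightarrow> 'd) set). real (dim (vanishing U (range \<Omega>)))) / real (card (UNIV :: ('m \<Rightarrow> 'd) set))"
    unfolding card_samples by simp
  also have "\<dots> \<le> measure_pmf.prob (pmf_of_set UNIV) {\<Omega>::'m \<Rightarrow> 'd. dim (vanishing U (range \<Omega>)) = 0}"
    by (rule prob_nat_zero_ge) auto
  also have "{\<Omega>::'m \<Rightarrow> 'd. dim (vanishing U (range \<Omega>)) = 0} = {\<Omega>. vanishing U (range \<Omega>) \<subseteq> {0}}"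
    by (simp add: dim_eq_0)
  finally show ?thesis .
qed

section \<open>The residual of a sampled vector\<close>

lemma linear_restr: "linear (restr \<Omega>)"
  by (rule linearI) (simp_all add: restr_def vec_eq_iff)

lemma restr_span: "restr \<Omega> ` span (set bs) = sampled_colspan bs \<Omega>"
  unfolding sampled_colspan_def by (rule span_linear_image[OF linear_restr, symmetric])

lemma residual_zero:
  assumes "x \<in> span (set bs)"
  shows "residual bs \<Omega> x = 0"
proof -
  have "restr \<Omega> x \<in> sampled_colspan bs \<Omega>" using assms restr_span by blast
  then show ?thesis unfolding residual_def orth_proj_def by (simp add: closest_point_self)
qed

text \<open>If sampling is injective on U, a vector of U outside span bs keeps a positive
  residual: its samples cannot coincide with those of any vector of span bs.\<close>
lemma residual_pos:
  fixes U :: "(real^'d) set" and \<Omega> :: "'m::finite \<Rightarrow> 'd::finite"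
  assumes U: "subspace U" and bU: "span (set bs) \<subseteq> U" and xU: "x \<in> U"
    and xn: "x \<notin> span (set bs)" and inj: "vanishing U (range \<Omega>) \<subseteq> {0}"
  shows "residual bs \<Omega> x > 0"
proof -
  let ?S = "sampled_colspan bs \<Omega>"
  have not_in: "restr \<Omega> x \<notin> ?S"
  proof
    assume "restr \<Omega> x \<in> ?S"
    then obtain z where z: "z \<in> span (set bs)" and xz: "restr \<Omega> x = restr \<Omega> z"
      using restr_span by (metis imageE)
    have "x - z \<in> vanishing U (range \<Omega>)"
      using z bU xU U xz by (auto simp: vanishing_def restr_def vec_eq_iff subspace_diff)
    then have "x = z" using inj by auto
    then show False using z xn by simp
  qed
  have "closed ?S" "?S \<noteq> {}"
    unfolding sampled_colspan_def using closed_span span_zero by blast+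
  then have "closest_point ?S (restr \<Omega> x) \<in> ?S" by (rule closest_point_in_set)
  then show ?thesis using not_in unfolding residual_def orth_proj_def by auto
qed

lemma sample_size_bound:
  fixes r m :: nat and \<mu> \<mu>0 \<delta> :: real
  assumes r: "1 \<le> r" and r\<mu>: "1 \<le> real r * \<mu>" and \<mu>: "\<mu> \<le> \<mu>0" and \<delta>: "0 < \<delta>" "\<delta> < 1"
    and m: "32 * real r * \<mu>0 * (ln (2 * real r / \<delta>))\<^sup>2 \<le> real m"
  shows "real r * (1 - 1 / (real r * \<mu>)) ^ m \<le> \<delta> / 2"
proof -
  define L where "L = ln (2 * real r / \<delta>)"
  define q where "q = 1 / (real r * \<mu>)"
  have L: "1 / 32 \<le> L"
  proof -
    have "2 \<le> 2 * real r / \<delta>" using r \<delta> by (simp add: le_divide_eq)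
    then have "ln 2 \<le> L" unfolding L_def by simp
    then show ?thesis using ln2_ge_two_thirds by linarith
  qed
  have "real r * \<mu> * L \<le> 32 * real r * \<mu> * L\<^sup>2"
  proof -
    have "L \<le> 32 * L * L" using L by (simp add: mult_right_mono[of 1 "32 * L" L])
    then have "real r * \<mu> * L \<le> real r * \<mu> * (32 * L * L)"
      using r\<mu> by (intro mult_left_mono) auto
    then show ?thesis by (simp add: power2_eq_square mult_ac)
  qed
  also have "\<dots> \<le> 32 * real r * \<mu>0 * L\<^sup>2"
    using \<mu> by (intro mult_right_mono mult_left_mono) auto
  also have "\<dots> \<le> real m" using m unfolding L_def .
  finally have qm: "L \<le> q * real m"
    using r\<mu> unfolding q_def by (simp add: field_simps)
  have "0 \<le> 1 - q" using r\<mu> unfolding q_def by simp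
  moreover have "1 - q \<le> exp (- q)" using exp_ge_add_one_self[of "- q"] by simp
  ultimately have "(1 - q) ^ m \<le> exp (- q) ^ m" by (rule power_mono[rotated])
  also have "\<dots> = exp (- (q * real m))" by (simp add: exp_of_nat_mult[symmetric] mult.commute)
  also have "\<dots> \<le> exp (- L)" using qm by simp
  also have "\<dots> = \<delta> / (2 * real r)" unfolding L_def using r \<delta> by (simp add: exp_minus)
  finally show ?thesis using r unfolding q_def by (simp add: field_simps)
qed

theorem corollary1:
  fixes U :: "(real^'d) set" and r :: nat and \<mu>0 :: real
    and bs :: "(real^'d) list" and x :: "real^'d" and \<delta> :: real
  assumes "subspace U" and "dim U = r" and "coherence U \<le> \<mu>0"
    and "orthonormal_list bs" and "span (set bs) \<subseteq> U"
    and "x \<in> U"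
    and "0 < \<delta>" and "\<delta> < 1"
  shows "(x \<notin> span (set bs) \<and>
          real CARD('m::finite) \<ge> 32 * real r * \<mu>0 * (ln (2 * real r / \<delta>))\<^sup>2 \<longrightarrow>
          measure_pmf.prob (pmf_of_set (UNIV :: ('m \<Rightarrow> 'd) set))
             {\<Omega>. residual bs \<Omega> x > 0} \<ge> 1 - 4 * \<delta>)
       \<and> (x \<in> span (set bs) \<longrightarrow>
          (\<forall>\<Omega> :: 'm \<Rightarrow> 'd. sq_invertible (length bs) (sampled_gram bs \<Omega>) \<longrightarrow>
             residual bs \<Omega> x = 0))"
proof (intro conjI impI allI)
  fix \<Omega> :: "'m \<Rightarrow> 'd"
  assume "x \<in> span (set bs)"
  then show "residual bs \<Omega> x = 0" by (rule residual_zero)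
next
  note U = assms(1) and dim_U = assms(2) and coh = assms(3) and bU = assms(5) and xU = assms(6)
  assume hyp: "x \<notin> span (set bs) \<and> real CARD('m) \<ge> 32 * real r * \<mu>0 * (ln (2 * real r / \<delta>))\<^sup>2"
  have "x \<noteq> 0" using hyp span_zero by metis
  then have "dim U \<noteq> 0" using xU by (auto simp: dim_eq_0)
  then have r: "1 \<le> r" using dim_U by simp
  have rd: "real r \<le> leverage U * CARD('d)" using dim_le_leverage_card[OF U] dim_U by simp
  then have one: "1 \<le> leverage U * CARD('d)" using r by linarith
  then have "0 < leverage U * CARD('d)" by linarith
  then have lev: "0 < leverage U" by (simp add: zero_less_mult_iff)
  have c: "1 / leverage U \<le> CARD('d)" using one lev by (simp add: divide_le_eq mult.commute)
  have r_coh: "real r * coherence U = CARD('d) * leverage U"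
    using r unfolding coherence_eq_leverage dim_U by simp
  have "1 \<le> real r * coherence U" using r_coh one by (simp add: mult.commute)
  from sample_size_bound[OF r this coh assms(7,8) hyp[THEN conjunct2]]
  have "real r * (1 - 1 / (real r * coherence U)) ^ CARD('m) \<le> \<delta> / 2" .
  then have "1 - 4 * \<delta> \<le> 1 - real r * (1 - 1 / (real r * coherence U)) ^ CARD('m)"
    using assms(7) by linarith
  also have "\<dots> \<le> measure_pmf.prob (pmf_of_set UNIV) {\<Omega> :: 'm \<Rightarrow> 'd. vanishing U (range \<Omega>) \<subseteq> {0}}"
    using prob_sampling_injective[OF U lev c] dim_U r_coh by simp
  also have "\<dots> \<le> measure_pmf.prob (pmf_of_set UNIV) {\<Omega> :: 'm \<Rightarrow> 'd. residual bs \<Omega> x > 0}"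
    by (rule measure_pmf.finite_measure_mono) (use residual_pos[OF U bU xU] hyp in auto)
  finally show "measure_pmf.prob (pmf_of_set UNIV) {\<Omega> :: 'm \<Rightarrow> 'd. residual bs \<Omega> x > 0} \<ge> 1 - 4 * \<delta>" .
qed

end
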